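(* Let $k\geq 2$ be an integer, and for $n\ge 1$ let $P_{n,k}=B_k(n)/k^n$ be the probability that a uniformly random length-$n$ word over $\Sigma_k$ has a unique border, where $B_k(n)$ is the number of length-$n$ words over $\Sigma_k$ with a unique border. Then the limit $P_k=\lim_{n\to\infty}P_{n,k}$ exists.
   Context: $\Sigma_k=\{0,1,\ldots,k-1\}$. A border of a word $w$ is a non-empty word that is both a proper prefix and a proper suffix of $w$. A word has a unique border if it has exactly one border. *)

theory Defs
  imports Complex_Main "HOL-Library.Sublist"
begin

definition words :: "nat \<Rightarrow> nat \<Rightarrow> nat list set" where
  "words k n = {w. length w = n \<and> set w \<subseteq> {0..<k}}"

definition borders :: "'a list \<Rightarrow> 'a list set" where
  "borders w = {u. u \<noteq> [] \<and> strict_prefix u w \<and> strict_suffix u w}"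

definition has_unique_border :: "'a list \<Rightarrow> bool" where
  "has_unique_border w \<longleftrightarrow> card (borders w) = 1"

definition B :: "nat \<Rightarrow> nat \<Rightarrow> nat" where
  "B k n = card {w \<in> words k n. has_unique_border w}"

definition P :: "nat \<Rightarrow> nat \<Rightarrow> real" where
  "P n k = real (B k n) / real k ^ n"

end

theory Submission imports Defs begin

text \<open>
  Fix a cut-off length \<open>L\<close> and let \<open>n \<ge> 2 L\<close>. A word of length \<open>n\<close> with a border of
  length \<open>m\<close> is determined by its first \<open>n - m\<close> letters, so the proportion of words with
  some border of length at least \<open>L\<close> is at most \<open>k\<^sup>-\<^sup>L + k\<^sup>-\<^sup>L\<^sup>-\<^sup>1 + \<dots> \<le> 2 k\<^sup>-\<^sup>L\<close>.
  All other words have only borders shorter than \<open>L\<close>, and these are read off from the first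
  and the last \<open>L\<close> letters, which are independent of each other. Hence \<open>P n k\<close> lies within
  \<open>2 k\<^sup>-\<^sup>L\<close> of a number that does not depend on \<open>n\<close>, and the sequence is Cauchy.
\<close>

definition border_lengths :: "'a list \<Rightarrow> nat set" where
  "border_lengths w = {m \<in> {1..<length w}. take m w = drop (length w - m) w}"

lemma borders_eq_image_border_lengths: "borders w = (\<lambda>m. take m w) ` border_lengths w"
proof -
  have "strict_prefix u w \<longleftrightarrow> length u < length w \<and> u = take (length u) w" for u :: "'a list"
    by (auto simp: strict_prefix_def prefix_def) (metis append_take_drop_id)
  moreover have "strict_suffix u w \<longleftrightarrow> length u < length w \<and> u = drop (length w - length u) w"
    for u :: "'a list"
    by (auto simp: strict_suffix_def suffix_def) (metis append_take_drop_id)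
  ultimately show ?thesis
    by (auto simp: borders_def border_lengths_def image_iff Suc_le_eq intro!: exI[of _ "length _"])
qed

lemma card_borders: "card (borders w) = card (border_lengths w)"
proof -
  have "inj_on (\<lambda>m. take m w) (border_lengths w)"
    by (rule inj_onI) (auto simp: border_lengths_def dest: arg_cong[where f = length])
  then show ?thesis by (simp add: borders_eq_image_border_lengths card_image)
qed

lemma words_eq_lists_length: "words k n = {xs. set xs \<subseteq> {0..<k} \<and> length xs = n}"
  by (auto simp: words_def)

lemma finite_words [simp]: "finite (words k n)"
  by (simp add: words_eq_lists_length finite_lists_length_eq)

lemma card_words: "card (words k n) = k ^ n"
  by (simp add: words_eq_lists_length card_lists_length_eq)

lemma nth_mod_period:
  assumes len: "length w = p + m" and border: "take m w = drop p w" and i: "i < length w"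
  shows "w ! i = w ! (i mod p)"
  using i
proof (induction i rule: less_induct)
  case (less i)
  show ?case
  proof (cases "p \<le> i \<and> 0 < p")
    case True
    have "w ! i = take m w ! (i - p)"
      using True less.prems by (simp add: border len)
    also have "\<dots> = w ! (i - p)"
      using True less.prems len by (intro nth_take) linarith
    also have "\<dots> = w ! ((i - p) mod p)"
      using True less by simp
    finally show ?thesis
      using True by (simp add: le_mod_geq)
  qed auto
qed

lemma eq_if_border_and_prefix_eq:
  assumes "length u = p + m" "length v = p + m" "0 < p"
    and "take m u = drop p u" "take m v = drop p v" and "take p u = take p v"
  shows "u = v"
proof (rule nth_equalityI)
  fix i assume "i < length u"
  then have "u ! i = u ! (i mod p)" "v ! i = v ! (i mod p)"
    using assms nth_mod_period[of u p m i] nth_mod_period[of v p m i] by simp_all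
  moreover have "u ! (i mod p) = v ! (i mod p)"
    using arg_cong[OF assms(6), of "\<lambda>x. x ! (i mod p)"] assms(3) by simp
  ultimately show "u ! i = v ! i"
    by simp
qed (use assms in simp)

lemma card_words_with_border_length_le:
  assumes "m < n"
  shows "card {w \<in> words k n. take m w = drop (n - m) w} \<le> k ^ (n - m)"
proof -
  let ?S = "{w \<in> words k n. take m w = drop (n - m) w}"
  have "inj_on (take (n - m)) ?S"
    by (rule inj_onI, rule eq_if_border_and_prefix_eq[of _ "n - m" m]) (use assms in \<open>auto simp: words_def\<close>)
  moreover have "take (n - m) ` ?S \<subseteq> words k (n - m)"
    by (auto simp: words_def dest: in_set_takeD)
  ultimately have "card ?S \<le> card (words k (n - m))"
    by (intro card_inj_on_le) auto
  then show ?thesis by (simp add: card_words)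
qed

lemma sum_powers_le_twice_last:
  assumes "2 \<le> (k :: nat)"
  shows "(\<Sum>j\<le>N. k ^ j) \<le> 2 * k ^ N"
proof (induction N)
  case (Suc N)
  have "2 * k ^ N \<le> k ^ Suc N"
    using assms by simp
  moreover have "(\<Sum>j\<le>Suc N. k ^ j) = (\<Sum>j\<le>N. k ^ j) + k ^ Suc N"
    by simp
  ultimately show ?case
    using Suc.IH by linarith
qed simp

definition words_with_long_border :: "nat \<Rightarrow> nat \<Rightarrow> nat \<Rightarrow> nat list set" where
  "words_with_long_border k L n = {w \<in> words k n. \<exists>m\<in>{L..<n}. take m w = drop (n - m) w}"

lemma card_words_with_long_border_le:
  assumes "2 \<le> k"
  shows "card (words_with_long_border k L n) \<le> 2 * k ^ (n - L)"
proof -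
  have "words_with_long_border k L n = (\<Union>m\<in>{L..<n}. {w \<in> words k n. take m w = drop (n - m) w})"
    by (auto simp: words_with_long_border_def)
  then have "card (words_with_long_border k L n) \<le> (\<Sum>m\<in>{L..<n}. k ^ (n - m))"
    by (auto intro!: card_UN_le[THEN order_trans] sum_mono card_words_with_border_length_le)
  also have "\<dots> = (\<Sum>j\<in>(\<lambda>m. n - m) ` {L..<n}. k ^ j)"
    by (subst sum.reindex) (auto simp: inj_on_def)
  also have "\<dots> \<le> (\<Sum>j\<le>n - L. k ^ j)"
    by (intro sum_mono2) auto
  also have "\<dots> \<le> 2 * k ^ (n - L)"
    using assms by (rule sum_powers_le_twice_last)
  finally show ?thesis .
qed

definition overlap_lengths :: "nat \<Rightarrow> 'a list \<Rightarrow> 'a list \<Rightarrow> nat set" where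
  "overlap_lengths L x y = {m \<in> {1..<L}. take m x = drop (L - m) y}"

lemma border_lengths_Int_lessThan:
  assumes "length w = n" "2 * L \<le> n"
  shows "border_lengths w \<inter> {..<L} = overlap_lengths L (take L w) (drop (n - L) w)"
proof -
  have "take m (take L w) = take m w \<and> drop (L - m) (drop (n - L) w) = drop (n - m) w"
    if "m < L" for m
  proof -
    have "L - m + (n - L) = n - m" using that assms by linarith
    then show ?thesis using that by (simp add: min_def)
  qed
  then show ?thesis
    using assms unfolding border_lengths_def overlap_lengths_def by auto
qed

lemma card_words_by_ends:
  assumes "2 * L \<le> n"
  shows "card {w \<in> words k n. Q (take L w) (drop (n - L) w)}
    = card {(x, y) \<in> words k L \<times> words k L. Q x y} * k ^ (n - 2 * L)"
proof -
  let ?ends = "{(x, y) \<in> words k L \<times> words k L. Q x y}"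
  have split: "take L w @ take (n - 2 * L) (drop L w) @ drop (n - L) w = w"
    if "length w = n" for w :: "nat list"
  proof -
    have "drop (n - L) w = drop (n - 2 * L) (drop L w)"
      using that assms by (simp add: add.commute)
    then show ?thesis
      by (simp only: append_take_drop_id)
  qed
  have "bij_betw (\<lambda>((x, y), z). x @ z @ y) (?ends \<times> words k (n - 2 * L))
    {w \<in> words k n. Q (take L w) (drop (n - L) w)}"
    by (rule bij_betw_byWitness[where f' = "\<lambda>w. ((take L w, drop (n - L) w), take (n - 2 * L) (drop L w))"])
      (use assms split in \<open>auto simp: words_def subset_iff dest: in_set_takeD in_set_dropD\<close>)
  then have "card {w \<in> words k n. Q (take L w) (drop (n - L) w)} = card (?ends \<times> words k (n - 2 * L))"
    by (simp add: bij_betw_same_card)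
  then show ?thesis
    by (simp add: card_cartesian_product card_words)
qed

definition unique_overlap_pairs :: "nat \<Rightarrow> nat \<Rightarrow> (nat list \<times> nat list) set" where
  "unique_overlap_pairs k L = {(x, y) \<in> words k L \<times> words k L. card (overlap_lengths L x y) = 1}"

lemma border_lengths_subset_lessThan:
  assumes "w \<in> words k n" "w \<notin> words_with_long_border k L n"
  shows "border_lengths w \<subseteq> {..<L}"
  using assms by (auto simp: border_lengths_def words_with_long_border_def words_def)

lemma B_approx:
  assumes "2 \<le> k" "2 * L \<le> n"
  shows "\<bar>real (B k n) - real (card (unique_overlap_pairs k L) * k ^ (n - 2 * L))\<bar>
    \<le> 2 * real k ^ (n - L)"
proof -
  let ?A = "{w \<in> words k n. card (border_lengths w) = 1}"
  let ?C = "{w \<in> words k n. card (border_lengths w \<inter> {..<L}) = 1}"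
  let ?D = "words_with_long_border k L n"
  let ?c = "card (unique_overlap_pairs k L) * k ^ (n - 2 * L)"
  have "?A - ?D = ?C - ?D"
    using border_lengths_subset_lessThan by (auto simp: Int_absorb2)
  then have "?A \<subseteq> ?C \<union> ?D" "?C \<subseteq> ?A \<union> ?D"
    by blast+
  moreover have "card X \<le> card Y + card ?D" if "X \<subseteq> Y \<union> ?D" "Y \<subseteq> words k n" for X Y
  proof -
    have "finite (Y \<union> ?D)"
      using that(2) by (auto simp: words_with_long_border_def intro: finite_subset)
    then show ?thesis
      using card_mono[OF _ that(1)] card_Un_le[of Y ?D] by linarith
  qed
  ultimately have "card ?A \<le> card ?C + card ?D" "card ?C \<le> card ?A + card ?D"
    by blast+
  moreover have "card ?A = B k n"
    by (simp add: B_def has_unique_border_def card_borders)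
  moreover have "card ?C = ?c"
  proof -
    have "?C = {w \<in> words k n. card (overlap_lengths L (take L w) (drop (n - L) w)) = 1}"
      using assms(2) by (auto simp: words_def border_lengths_Int_lessThan)
    then show ?thesis
      using card_words_by_ends[OF assms(2), of k "\<lambda>x y. card (overlap_lengths L x y) = 1"]
      by (simp only: unique_overlap_pairs_def)
  qed
  moreover have "card ?D \<le> 2 * k ^ (n - L)"
    using assms(1) by (rule card_words_with_long_border_le)
  ultimately have "B k n \<le> ?c + 2 * k ^ (n - L)" "?c \<le> B k n + 2 * k ^ (n - L)"
    by linarith+
  then have "real (B k n) \<le> real (?c + 2 * k ^ (n - L))" "real ?c \<le> real (B k n + 2 * k ^ (n - L))"
    using of_nat_mono by blast+
  then show ?thesis
    by simp
qed

lemma P_approx: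
  assumes "2 \<le> k" "2 * L \<le> n"
  shows "\<bar>P n k - real (card (unique_overlap_pairs k L)) / real k ^ (2 * L)\<bar> \<le> 2 / real k ^ L"
proof -
  let ?c = "card (unique_overlap_pairs k L)"
  have k: "real k ^ n > 0"
    using assms(1) by simp
  have "real k ^ (n - 2 * L) / real k ^ n = 1 / real k ^ (2 * L)"
    "real k ^ (n - L) / real k ^ n = 1 / real k ^ L"
    using assms by (simp_all add: power_diff)
  then have c: "real ?c / real k ^ (2 * L) = real (?c * k ^ (n - 2 * L)) / real k ^ n"
    and two: "2 / real k ^ L = 2 * real k ^ (n - L) / real k ^ n"
    by (metis of_nat_mult of_nat_power times_divide_eq_right mult_1_right)+
  have "\<bar>P n k - real ?c / real k ^ (2 * L)\<bar> = \<bar>real (B k n) - real (?c * k ^ (n - 2 * L))\<bar> / real k ^ n"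
    using k by (simp only: P_def c abs_div_pos diff_divide_distrib)
  also have "\<dots> \<le> 2 / real k ^ L"
    unfolding two by (rule divide_right_mono[OF B_approx[OF assms]]) (use k in simp)
  finally show ?thesis .
qed

lemma convergent_if_eventually_near_constants:
  fixes f :: "nat \<Rightarrow> 'a :: complete_space"
  assumes "\<And>e. 0 < e \<Longrightarrow> \<exists>c N. \<forall>n\<ge>N. dist (f n) c < e"
  shows "convergent f"
proof -
  have "Cauchy f"
  proof (rule metric_CauchyI)
    fix e :: real assume "0 < e"
    then obtain c N where "\<forall>n\<ge>N. dist (f n) c < e / 2"
      using assms[of "e / 2"] by auto
    then have "\<forall>m\<ge>N. \<forall>n\<ge>N. dist (f m) (f n) < e"
      using dist_triangle_half_l by blast
    then show "\<exists>N. \<forall>m\<ge>N. \<forall>n\<ge>N. dist (f m) (f n) < e" ..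
  qed
  then show ?thesis
    by (simp add: Cauchy_convergent_iff)
qed

theorem theorem12:
  fixes k :: nat
  assumes "k \<ge> 2"
  shows "convergent (\<lambda>n. P n k)"
proof (rule convergent_if_eventually_near_constants)
  fix e :: real assume "0 < e"
  obtain L where "(1 / real k) ^ L < e / 2"
    using real_arch_pow_inv[of "e / 2" "1 / real k"] \<open>0 < e\<close> assms by auto
  then have "\<bar>P n k - real (card (unique_overlap_pairs k L)) / real k ^ (2 * L)\<bar> < e"
    if "2 * L \<le> n" for n
    using P_approx[OF assms that] by (simp add: power_one_over)
  then show "\<exists>c N. \<forall>n\<ge>N. dist (P n k) c < e"
    by (auto simp: dist_real_def)
qed

end
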